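(* Let $S$ be an entropy function for a finite set $X$. Given functions $\mu,\nu:2^X\to[0,\infty)$, there exist subsets $A_1\subset\cdots\subset A_m$ and $B_1\subset\cdots\subset B_n$ of $X$ with $A_m\cap B_n=\emptyset$, and functions $\mu',\nu':2^X\to[0,\infty)$ supported on $\{A_1,\dots,A_m\}$ and $\{B_1,\dots,B_n\}$ respectively, such that $\phi_{\mu'}-\phi_{\nu'}=\phi_\mu-\phi_\nu$ and \[\sum_{A\subseteq X}(\mu'(A)+\nu'(A))S(A)\le\sum_{A\subseteq X}(\mu(A)+\nu(A))S(A).\]
   Context: An entropy function for a finite set $X$ is a function $S:2^X\to[0,\infty)$ with $S(\emptyset)=0$, $S(A)+S(B)\ge S(A\cap B)+S(A\cup B)$ and $S(A)+S(B)\ge S(A\setminus B)+S(B\setminus A)$ for all $A,B\subseteq X$. For $\mu:2^X\to\mathbb R$, $\phi_\mu:X\to\mathbb R$ is defined by $\phi_\mu(x):=\sum_{A\ni x}\mu(A)$. *)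

theory Defs
  imports Complex_Main
begin

definition entropy_function :: "'a set \<Rightarrow> ('a set \<Rightarrow> real) \<Rightarrow> bool" where
  "entropy_function X S \<longleftrightarrow>
     (\<forall>A. A \<subseteq> X \<longrightarrow> S A \<ge> 0) \<and> S {} = 0 \<and>
     (\<forall>A B. A \<subseteq> X \<longrightarrow> B \<subseteq> X \<longrightarrow> S A + S B \<ge> S (A \<inter> B) + S (A \<union> B)) \<and>
     (\<forall>A B. A \<subseteq> X \<longrightarrow> B \<subseteq> X \<longrightarrow> S A + S B \<ge> S (A - B) + S (B - A))"

definition phi :: "'a set \<Rightarrow> ('a set \<Rightarrow> real) \<Rightarrow> 'a \<Rightarrow> real" where
  "phi X \<mu> x = (\<Sum>A\<in>{A. A \<subseteq> X \<and> x \<in> A}. \<mu> A)"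

end

(*
  Put f = phi_mu - phi_nu. Peeling off the smallest positive level again and again writes the
  positive part of f as phi_mu' for a nonnegative mu' supported on a strict chain inside
  {f > 0}; likewise the negative part gives nu' on a chain inside N = {f < 0}.
  To compare costs we use LP duality. Edmonds' greedy algorithm yields a point w of the base
  polytope of S on Q = X - N that is tight on the first chain, and a point z of the base polytope
  on N tight on the second. Gluing y = w on Q and y = -z on N gives |y(A)| <= S(A) for every A,
  by posimodularity. Hence
    sum (mu' + nu') S = sum (mu' - nu') y = sum_x y(x) f(x) = sum (mu - nu) y <= sum (mu + nu) S.
*)
theory Submission imports Defs begin

definition submodular_on :: "'a set \<Rightarrow> ('a set \<Rightarrow> real) \<Rightarrow> bool" where
  "submodular_on X S \<longleftrightarrow> (\<forall>A B. A \<subseteq> X \<longrightarrow> B \<subseteq> X \<longrightarrow> S (A \<inter> B) + S (A \<union> B) \<le> S A + S B)"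

definition posimodular_on :: "'a set \<Rightarrow> ('a set \<Rightarrow> real) \<Rightarrow> bool" where
  "posimodular_on X S \<longleftrightarrow> (\<forall>A B. A \<subseteq> X \<longrightarrow> B \<subseteq> X \<longrightarrow> S (A - B) + S (B - A) \<le> S A + S B)"

definition base_polytope :: "'a set \<Rightarrow> ('a set \<Rightarrow> real) \<Rightarrow> ('a \<Rightarrow> real) set" where
  "base_polytope Q S = {w. (\<forall>E\<subseteq>Q. sum w E \<le> S E) \<and> sum w Q = S Q}"

lemma entropy_function_iff:
  "entropy_function X S \<longleftrightarrow>
     (\<forall>A\<subseteq>X. S A \<ge> 0) \<and> S {} = 0 \<and> submodular_on X S \<and> posimodular_on X S"
  unfolding entropy_function_def submodular_on_def posimodular_on_def ..

lemma submodular_on_subset: "submodular_on X S \<Longrightarrow> Q \<subseteq> X \<Longrightarrow> submodular_on Q S"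
  unfolding submodular_on_def by (meson subset_trans)

lemma finite_chain_of_proper_subsets_avoids_point:
  assumes "finite Q" "Q \<noteq> {}" "chain\<^sub>\<subseteq> \<C>" "\<C> \<subseteq> Pow Q - {Q}"
  shows "\<exists>x\<in>Q. \<forall>C\<in>\<C>. x \<notin> C"
proof (cases "\<C> = {}")
  case True
  then show ?thesis using assms(2) by blast
next
  case False
  have "\<C> \<subseteq> Pow Q" using assms(4) by blast
  then have "finite \<C>" using assms(1) by (simp add: finite_subset)
  then obtain M where M: "M \<in> \<C>" "\<forall>C\<in>\<C>. M \<subseteq> C \<longrightarrow> M = C"
    using finite_has_maximal[OF _ False] by blast
  have "\<forall>C\<in>\<C>. C \<subseteq> M" using M assms(3) unfolding chain_subset_def by blast
  moreover obtain x where "x \<in> Q - M" using M(1) assms(4) by blast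
  ultimately show ?thesis by blast
qed

lemma sum_fun_upd_notin: "x \<notin> E \<Longrightarrow> sum (w(x := v)) E = sum w E"
  by (rule sum.cong) auto

(* The greedy step: for E containing x, the bound on E is submodularity for E and Q - {x}. *)
lemma base_polytope_insert_point:
  assumes "finite Q" "x \<in> Q" "submodular_on Q S" "w \<in> base_polytope (Q - {x}) S"
  shows "w(x := S Q - S (Q - {x})) \<in> base_polytope Q S"
proof -
  let ?w = "w(x := S Q - S (Q - {x}))"
  have w_le: "sum w E \<le> S E" if "E \<subseteq> Q - {x}" for E
    using assms(4) that unfolding base_polytope_def by blast
  have w_top: "sum w (Q - {x}) = S (Q - {x})"
    using assms(4) unfolding base_polytope_def by blast
  have upd: "sum ?w E = S Q - S (Q - {x}) + sum w (E - {x})" if "E \<subseteq> Q" "x \<in> E" for E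
  proof -
    have "finite E" using assms(1) that(1) by (rule finite_subset[rotated])
    then have "sum ?w E = ?w x + sum ?w (E - {x})" using that(2) by (rule sum.remove)
    also have "sum ?w (E - {x}) = sum w (E - {x})" by (rule sum_fun_upd_notin) simp
    finally show ?thesis by simp
  qed
  have "sum ?w E \<le> S E" if E: "E \<subseteq> Q" for E
  proof (cases "x \<in> E")
    case False
    then have "sum ?w E = sum w E" by (rule sum_fun_upd_notin)
    also have "\<dots> \<le> S E" using E False by (intro w_le) blast
    finally show ?thesis .
  next
    case True
    have "E \<inter> (Q - {x}) = E - {x}" "E \<union> (Q - {x}) = Q" using E True assms(2) by blast+
    moreover have "S (E \<inter> (Q - {x})) + S (E \<union> (Q - {x})) \<le> S E + S (Q - {x})"
      using assms(3) E unfolding submodular_on_def by blast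
    ultimately have "S (E - {x}) + S Q \<le> S E + S (Q - {x})" by simp
    moreover have "sum w (E - {x}) \<le> S (E - {x})" using E by (intro w_le) blast
    ultimately show ?thesis using upd[OF E True] by linarith
  qed
  moreover have "sum ?w Q = S Q" using upd[OF subset_refl assms(2)] w_top by simp
  ultimately show ?thesis unfolding base_polytope_def by blast
qed

lemma submodular_base_tight_on_chain:
  assumes "finite Q" "S {} = 0" "submodular_on Q S" "chain\<^sub>\<subseteq> \<C>" "\<C> \<subseteq> Pow Q"
  shows "\<exists>w\<in>base_polytope Q S. \<forall>C\<in>\<C>. sum w C = S C"
  using assms(1,3-5)
proof (induction "card Q" arbitrary: Q \<C> rule: less_induct)
  case less
  show ?case
  proof (cases "Q = {}")
    case True
    then have "(\<lambda>_. 0) \<in> base_polytope Q S" "\<forall>C\<in>\<C>. C = {}"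
      using assms(2) less.prems(4) unfolding base_polytope_def by auto
    then show ?thesis using assms(2) by (metis sum.empty)
  next
    case False
    let ?\<C> = "\<C> - {Q}"
    have "chain\<^sub>\<subseteq> ?\<C>" using less.prems(3) unfolding chain_subset_def by blast
    moreover obtain x where x: "x \<in> Q" "\<forall>C\<in>?\<C>. x \<notin> C"
      using finite_chain_of_proper_subsets_avoids_point[OF less.prems(1) False \<open>chain\<^sub>\<subseteq> ?\<C>\<close>]
        less.prems(4) by blast
    moreover have "card (Q - {x}) < card Q" using less.prems(1) x(1) by (rule card_Diff1_less)
    moreover have "submodular_on (Q - {x}) S"
      using less.prems(2) by (rule submodular_on_subset) blast
    moreover have "?\<C> \<subseteq> Pow (Q - {x})" using x(2) less.prems(4) by blast
    ultimately obtain w where w: "w \<in> base_polytope (Q - {x}) S" "\<forall>C\<in>?\<C>. sum w C = S C"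
      using less.hyps[of "Q - {x}" ?\<C>] less.prems(1) by blast
    let ?w = "w(x := S Q - S (Q - {x}))"
    have base: "?w \<in> base_polytope Q S"
      using less.prems(1) x(1) less.prems(2) w(1) by (rule base_polytope_insert_point)
    have "sum ?w C = S C" if "C \<in> \<C>" for C
    proof (cases "C = Q")
      case True
      then show ?thesis using base unfolding base_polytope_def by simp
    next
      case False
      then have "x \<notin> C" "sum w C = S C" using that x(2) w(2) by auto
      then show ?thesis using sum_fun_upd_notin by metis
    qed
    then show ?thesis using base by blast
  qed
qed

lemma phi_add_point_mass:
  assumes "finite X" "P \<subseteq> X"
  shows "phi X (\<lambda>A. h A + (if A = P then c else 0)) x = phi X h x + (if x \<in> P then c else 0)"
proof -
  have "finite {A. A \<subseteq> X \<and> x \<in> A}" using assms(1) by simp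
  then show ?thesis using assms(2) unfolding phi_def by (simp add: sum.distrib)
qed

lemma strict_chain_snoc:
  assumes "\<forall>i\<in>{1..<m}. As i \<subset> As (Suc i)" "As m \<subset> P"
  shows "\<forall>i\<in>{1..<Suc m}. (As(Suc m := P)) i \<subset> (As(Suc m := P)) (Suc i)"
  using assms by (auto simp: less_Suc_eq)

lemma image_fun_upd_atLeastAtMost_Suc:
  "(As(Suc m := P)) ` {1..Suc m} = insert P (As ` {1..m})"
proof -
  have "{1..Suc m} = insert (Suc m) {1..m}" by auto
  moreover have "(As(Suc m := P)) ` {1..m} = As ` {1..m}" by (intro image_cong) auto
  ultimately show ?thesis by (simp only: image_insert fun_upd_same)
qed

lemma strict_chain_is_chain:
  assumes "\<forall>i\<in>{1..<m}. As i \<subset> As (Suc i)"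
  shows "chain\<^sub>\<subseteq> (As ` {1..m})"
proof -
  have mono: "As i \<subseteq> As j" if "1 \<le> i" "i \<le> j" "j \<le> m" for i j
    using that(2,3)
  proof (induction j rule: dec_induct)
    case (step n)
    have "As i \<subseteq> As n" using step.IH step.prems by simp
    moreover have "As n \<subset> As (Suc n)" using assms step that(1) by simp
    ultimately show ?case by blast
  qed simp
  show ?thesis unfolding chain_subset_def
  proof (intro ballI)
    fix C D assume "C \<in> As ` {1..m}" "D \<in> As ` {1..m}"
    then obtain i j where "C = As i" "D = As j" "i \<in> {1..m}" "j \<in> {1..m}" by blast
    then show "C \<subseteq> D \<or> D \<subseteq> C" using mono[of i j] mono[of j i] by (cases "i \<le> j") auto
  qed
qed

lemma subtract_min_positive_level:
  fixes g :: "'a \<Rightarrow> real"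
  assumes "finite X" "\<forall>x\<in>X. g x \<ge> 0" "P = {x\<in>X. g x > 0}" "P \<noteq> {}"
  obtains c where "c > 0" "\<forall>x\<in>X. g x - (if x \<in> P then c else 0) \<ge> 0"
    "{x\<in>X. g x - (if x \<in> P then c else 0) > 0} \<subset> P"
proof -
  have "finite P" using assms(1,3) by simp
  define c where "c = Min (g ` P)"
  have "c \<in> g ` P" unfolding c_def using \<open>finite P\<close> assms(4) by (intro Min_in) auto
  then obtain x0 where x0: "x0 \<in> P" "g x0 = c" by blast
  have "c \<le> g x" if "x \<in> P" for x unfolding c_def using \<open>finite P\<close> that by simp
  then have "\<forall>x\<in>X. g x - (if x \<in> P then c else 0) \<ge> 0" using assms(2) by auto
  moreover have "{x\<in>X. g x - (if x \<in> P then c else 0) > 0} \<subset> P"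
    using x0 assms(3) by auto
  moreover have "c > 0" using x0 assms(3) by simp
  ultimately show ?thesis using that by blast
qed

lemma phi_chain_decomposition:
  assumes "finite X" "\<forall>x\<in>X. g x \<ge> 0"
  shows "\<exists>(m::nat) As \<mu>. 1 \<le> m \<and> (\<forall>i\<in>{1..<m}. As i \<subset> As (Suc i)) \<and>
     As ` {1..m} \<subseteq> Pow {x\<in>X. g x > 0} \<and> (\<forall>A\<subseteq>X. \<mu> A \<ge> 0) \<and>
     (\<forall>A\<subseteq>X. \<mu> A \<noteq> 0 \<longrightarrow> A \<in> As ` {1..m}) \<and> (\<forall>x\<in>X. phi X \<mu> x = g x)"
  using assms(2)
proof (induction "card {x\<in>X. g x > 0}" arbitrary: g rule: less_induct)
  case less
  define P where "P = {x\<in>X. g x > 0}"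
  show ?case
  proof (cases "P = {}")
    case True
    then have "\<forall>x\<in>X. g x = 0" using less.prems unfolding P_def by force
    then show ?thesis
      by (intro exI[of _ 1] exI[of _ "\<lambda>_. {}"] exI[of _ "\<lambda>_. 0"]) (simp add: phi_def)
  next
    case False
    obtain c where "c > 0" and g'_nonneg: "\<forall>x\<in>X. g x - (if x \<in> P then c else 0) \<ge> 0"
      and supp: "{x\<in>X. g x - (if x \<in> P then c else 0) > 0} \<subset> P"
      using subtract_min_positive_level[OF assms(1) less.prems P_def False] .
    have "finite P" using assms(1) by (simp add: P_def)
    then have "card {x\<in>X. g x - (if x \<in> P then c else 0) > 0} < card {x\<in>X. g x > 0}"
      using supp unfolding P_def by (rule psubset_card_mono)
    from less.hyps[OF this g'_nonneg] obtain m As \<mu> where "1 \<le> m"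
      and As_chain: "\<forall>i\<in>{1..<m}. As i \<subset> As (Suc i)"
      and As_supp: "As ` {1..m} \<subseteq> Pow {x\<in>X. g x - (if x \<in> P then c else 0) > 0}"
      and \<mu>_nonneg: "\<forall>A\<subseteq>X. \<mu> A \<ge> 0" and \<mu>_supp: "\<forall>A\<subseteq>X. \<mu> A \<noteq> 0 \<longrightarrow> A \<in> As ` {1..m}"
      and \<mu>_phi: "\<forall>x\<in>X. phi X \<mu> x = g x - (if x \<in> P then c else 0)"
      by (elim exE conjE) (rule that, assumption+)
    have "As m \<subseteq> {x\<in>X. g x - (if x \<in> P then c else 0) > 0}" using As_supp \<open>1 \<le> m\<close>
      by (meson PowD atLeastAtMost_iff image_subset_iff order_refl)
    then have "As m \<subset> P" using supp by (rule subset_psubset_trans)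
    have "P \<subseteq> X" unfolding P_def by blast
    note img = image_fun_upd_atLeastAtMost_Suc[of As m P]
    show ?thesis
    proof (intro exI conjI)
      show "\<forall>i\<in>{1..<Suc m}. (As(Suc m := P)) i \<subset> (As(Suc m := P)) (Suc i)"
        using As_chain \<open>As m \<subset> P\<close> by (rule strict_chain_snoc)
      show "(As(Suc m := P)) ` {1..Suc m} \<subseteq> Pow {x\<in>X. g x > 0}"
        using As_supp Pow_mono[OF psubset_imp_subset[OF supp]]
        unfolding img P_def[symmetric] by simp
      show "\<forall>A\<subseteq>X. \<mu> A + (if A = P then c else 0) \<ge> 0" using \<mu>_nonneg \<open>c > 0\<close> by simp
      show "\<forall>A\<subseteq>X. \<mu> A + (if A = P then c else 0) \<noteq> 0 \<longrightarrow> A \<in> (As(Suc m := P)) ` {1..Suc m}"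
        using img \<mu>_supp by auto
      show "\<forall>x\<in>X. phi X (\<lambda>A. \<mu> A + (if A = P then c else 0)) x = g x"
        using \<mu>_phi phi_add_point_mass[OF assms(1) \<open>P \<subseteq> X\<close>] by simp
    qed simp
  qed
qed

lemma posimodular_glued_sum_le:
  assumes "posimodular_on X S" "Q \<inter> N = {}" "Q \<union> N = X" "finite N"
    and "w \<in> base_polytope Q S" "z \<in> base_polytope N S" "A \<subseteq> X"
  shows "sum w (A \<inter> Q) - sum z (A \<inter> N) \<le> S A"
proof -
  have "A - N = A \<inter> Q" using assms(2,3,7) by blast
  then have "S (A \<inter> Q) + S (N - A) \<le> S A + S N"
    using assms(1,3,7) unfolding posimodular_on_def by (metis Un_upper2)
  moreover have "sum w (A \<inter> Q) \<le> S (A \<inter> Q)" using assms(5) unfolding base_polytope_def by blast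
  moreover have "sum z (N - A) \<le> S (N - A)" using assms(6) unfolding base_polytope_def by blast
  moreover have "sum z (A \<inter> N) + sum z (N - A) = S N"
    using assms(4,6) sum.Int_Diff[of N z A] unfolding base_polytope_def by (simp add: Int_commute)
  ultimately show ?thesis by linarith
qed

lemma exists_certificate_tight_on_chains:
  assumes "finite X" "entropy_function X S" "Q \<inter> N = {}" "Q \<union> N = X"
    and "chain\<^sub>\<subseteq> \<A>" "\<A> \<subseteq> Pow Q" "chain\<^sub>\<subseteq> \<B>" "\<B> \<subseteq> Pow N"
  shows "\<exists>y. (\<forall>A\<subseteq>X. \<bar>sum y A\<bar> \<le> S A) \<and> (\<forall>A\<in>\<A>. sum y A = S A) \<and> (\<forall>B\<in>\<B>. sum y B = - S B)"
proof -
  have S: "S {} = 0" "submodular_on X S" "posimodular_on X S"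
    using assms(2) unfolding entropy_function_iff by blast+
  have fin: "finite Q" "finite N" using assms(1,4) by auto
  have sub: "submodular_on Q S" "submodular_on N S"
    using submodular_on_subset[OF S(2)] assms(4) by blast+
  obtain w z where
    w: "w \<in> base_polytope Q S" "\<forall>A\<in>\<A>. sum w A = S A" and
    z: "z \<in> base_polytope N S" "\<forall>B\<in>\<B>. sum z B = S B"
    using submodular_base_tight_on_chain[OF fin(1) S(1) sub(1) assms(5,6)]
      submodular_base_tight_on_chain[OF fin(2) S(1) sub(2) assms(7,8)] by meson
  define y where "y x = (if x \<in> N then - z x else w x)" for x
  have y_split: "sum y A = sum w (A \<inter> Q) - sum z (A \<inter> N)" if "A \<subseteq> X" for A
  proof -
    have "finite A" using assms(1) that by (rule finite_subset[rotated])
    then have "sum y A = sum y (A \<inter> Q) + sum y (A \<inter> N)"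
      using that assms(3,4) by (subst sum.union_disjoint[symmetric]) (auto intro: sum.cong)
    also have "sum y (A \<inter> Q) = sum w (A \<inter> Q)"
      using assms(3) unfolding y_def by (intro sum.cong) auto
    also have "sum y (A \<inter> N) = - sum z (A \<inter> N)" unfolding y_def by (simp add: sum_negf)
    finally show ?thesis by simp
  qed
  have "\<bar>sum y A\<bar> \<le> S A" if "A \<subseteq> X" for A
    using posimodular_glued_sum_le[OF S(3) assms(3,4) fin(2) w(1) z(1) that]
      posimodular_glued_sum_le[OF S(3) _ _ fin(1) z(1) w(1) that] assms(3,4) y_split[OF that]
    by (simp add: Int_commute Un_commute)
  moreover have "sum y A = S A" if "A \<in> \<A>" for A
  proof -
    have "A \<subseteq> Q" using that assms(6) by blast
    then have "sum y A = sum w A" using assms(3) unfolding y_def by (intro sum.cong) auto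
    then show ?thesis using w(2) that by simp
  qed
  moreover have "sum y B = - S B" if "B \<in> \<B>" for B
  proof -
    have "B \<subseteq> N" using that assms(8) by blast
    then have "sum y B = - sum z B" unfolding y_def by (simp add: sum_negf subset_iff)
    then show ?thesis using z(2) that by simp
  qed
  ultimately show ?thesis by blast
qed

lemma sum_Pow_mult_sum_eq_sum_phi:
  assumes "finite X"
  shows "(\<Sum>A\<in>Pow X. h A * sum y A) = (\<Sum>x\<in>X. y x * phi X h x)"
proof -
  have "(\<Sum>A\<in>Pow X. h A * sum y A) = (\<Sum>A\<in>Pow X. \<Sum>x\<in>{x. x \<in> X \<and> x \<in> A}. h A * y x)"
    by (intro sum.cong) (auto simp: sum_distrib_left Int_absorb1 Collect_conj_eq Int_def[symmetric])
  also have "\<dots> = (\<Sum>x\<in>X. \<Sum>A\<in>{A. A \<in> Pow X \<and> x \<in> A}. h A * y x)"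
    using assms by (intro sum.swap_restrict) auto
  also have "\<dots> = (\<Sum>x\<in>X. y x * phi X h x)"
    by (simp add: phi_def sum_distrib_left mult.commute)
  finally show ?thesis .
qed

lemma phi_diff: "phi X (\<lambda>A. f A - g A) x = phi X f x - phi X g x"
  by (simp add: phi_def sum_subtractf)

lemma weighted_entropy_le_by_certificate:
  assumes "finite X" "\<forall>A\<subseteq>X. \<bar>sum y A\<bar> \<le> S A"
    and "\<forall>A\<subseteq>X. \<mu> A \<ge> 0" "\<forall>A\<subseteq>X. \<nu> A \<ge> 0"
    and "\<forall>A\<subseteq>X. \<mu>' A \<noteq> 0 \<longrightarrow> sum y A = S A" "\<forall>A\<subseteq>X. \<nu>' A \<noteq> 0 \<longrightarrow> sum y A = - S A"
    and "\<forall>x\<in>X. phi X \<mu>' x - phi X \<nu>' x = phi X \<mu> x - phi X \<nu> x"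
  shows "(\<Sum>A\<in>Pow X. (\<mu>' A + \<nu>' A) * S A) \<le> (\<Sum>A\<in>Pow X. (\<mu> A + \<nu> A) * S A)"
proof -
  have "(\<Sum>A\<in>Pow X. (\<mu>' A + \<nu>' A) * S A) = (\<Sum>A\<in>Pow X. (\<mu>' A - \<nu>' A) * sum y A)"
  proof (rule sum.cong)
    fix A assume "A \<in> Pow X"
    then have "\<mu>' A * S A = \<mu>' A * sum y A" "\<nu>' A * S A = - \<nu>' A * sum y A"
      using assms(5,6) by (cases "\<mu>' A = 0"; cases "\<nu>' A = 0"; auto)+
    then show "(\<mu>' A + \<nu>' A) * S A = (\<mu>' A - \<nu>' A) * sum y A" by (simp add: algebra_simps)
  qed simp
  also have "\<dots> = (\<Sum>x\<in>X. y x * (phi X \<mu>' x - phi X \<nu>' x))"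
    using sum_Pow_mult_sum_eq_sum_phi[OF assms(1)] by (simp add: phi_diff)
  also have "\<dots> = (\<Sum>x\<in>X. y x * (phi X \<mu> x - phi X \<nu> x))"
    using assms(7) by simp
  also have "\<dots> = (\<Sum>A\<in>Pow X. (\<mu> A - \<nu> A) * sum y A)"
    using sum_Pow_mult_sum_eq_sum_phi[OF assms(1)] by (simp add: phi_diff)
  also have "\<dots> \<le> (\<Sum>A\<in>Pow X. (\<mu> A + \<nu> A) * S A)"
  proof (rule sum_mono)
    fix A assume "A \<in> Pow X"
    then have "sum y A \<le> S A" "- sum y A \<le> S A" "\<mu> A \<ge> 0" "\<nu> A \<ge> 0"
      using assms(2-4) by (auto simp: abs_le_iff)
    then have "\<mu> A * sum y A \<le> \<mu> A * S A" "\<nu> A * - sum y A \<le> \<nu> A * S A"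
      by (metis mult_left_mono)+
    then show "(\<mu> A - \<nu> A) * sum y A \<le> (\<mu> A + \<nu> A) * S A" by (simp add: algebra_simps)
  qed
  finally show ?thesis .
qed

lemma weighted_entropy_le_of_chain_supports:
  assumes "finite X" "entropy_function X S" "Q \<inter> N = {}" "Q \<union> N = X"
    and "chain\<^sub>\<subseteq> \<A>" "\<A> \<subseteq> Pow Q" "chain\<^sub>\<subseteq> \<B>" "\<B> \<subseteq> Pow N"
    and "\<forall>A\<subseteq>X. \<mu> A \<ge> 0" "\<forall>A\<subseteq>X. \<nu> A \<ge> 0"
    and "\<forall>A\<subseteq>X. \<mu>' A \<noteq> 0 \<longrightarrow> A \<in> \<A>" "\<forall>A\<subseteq>X. \<nu>' A \<noteq> 0 \<longrightarrow> A \<in> \<B>"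
    and "\<forall>x\<in>X. phi X \<mu>' x - phi X \<nu>' x = phi X \<mu> x - phi X \<nu> x"
  shows "(\<Sum>A\<in>Pow X. (\<mu>' A + \<nu>' A) * S A) \<le> (\<Sum>A\<in>Pow X. (\<mu> A + \<nu> A) * S A)"
proof -
  obtain y where y: "\<forall>A\<subseteq>X. \<bar>sum y A\<bar> \<le> S A" "\<forall>A\<in>\<A>. sum y A = S A" "\<forall>B\<in>\<B>. sum y B = - S B"
    using exists_certificate_tight_on_chains[OF assms(1-8)] by (elim exE conjE) (rule that)
  have tight: "\<forall>A\<subseteq>X. \<mu>' A \<noteq> 0 \<longrightarrow> sum y A = S A" "\<forall>A\<subseteq>X. \<nu>' A \<noteq> 0 \<longrightarrow> sum y A = - S A"
    using y(2,3) assms(11,12) by meson+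
  show ?thesis
    by (rule weighted_entropy_le_by_certificate[OF assms(1) y(1) assms(9,10) tight assms(13)])
qed

theorem corollary32:
  fixes X :: "'a set" and S \<mu> \<nu> :: "'a set \<Rightarrow> real"
  assumes "finite X"
    and "entropy_function X S"
    and "\<forall>A. A \<subseteq> X \<longrightarrow> \<mu> A \<ge> 0"
    and "\<forall>A. A \<subseteq> X \<longrightarrow> \<nu> A \<ge> 0"
  shows "\<exists>(m::nat) (n::nat) (As::nat \<Rightarrow> 'a set) (Bs::nat \<Rightarrow> 'a set) \<mu>' \<nu>'.
           1 \<le> m \<and> 1 \<le> n \<and>
           (\<forall>i\<in>{1..m}. As i \<subseteq> X) \<and> (\<forall>j\<in>{1..n}. Bs j \<subseteq> X) \<and>
           (\<forall>i\<in>{1..<m}. As i \<subset> As (Suc i)) \<and>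
           (\<forall>j\<in>{1..<n}. Bs j \<subset> Bs (Suc j)) \<and>
           As m \<inter> Bs n = {} \<and>
           (\<forall>A. A \<subseteq> X \<longrightarrow> \<mu>' A \<ge> 0 \<and> \<nu>' A \<ge> 0) \<and>
           (\<forall>A. A \<subseteq> X \<longrightarrow> \<mu>' A \<noteq> 0 \<longrightarrow> A \<in> As ` {1..m}) \<and>
           (\<forall>A. A \<subseteq> X \<longrightarrow> \<nu>' A \<noteq> 0 \<longrightarrow> A \<in> Bs ` {1..n}) \<and>
           (\<forall>x\<in>X. phi X \<mu>' x - phi X \<nu>' x = phi X \<mu> x - phi X \<nu> x) \<and>
           (\<Sum>A\<in>Pow X. (\<mu>' A + \<nu>' A) * S A) \<le> (\<Sum>A\<in>Pow X. (\<mu> A + \<nu> A) * S A)"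
proof -
  define f where "f x = phi X \<mu> x - phi X \<nu> x" for x
  define N where "N = {x\<in>X. f x < 0}"
  obtain m As \<mu>' where "1 \<le> m" and As_chain: "\<forall>i\<in>{1..<m}. As i \<subset> As (Suc i)"
    and As_pos: "As ` {1..m} \<subseteq> Pow {x\<in>X. max (f x) 0 > 0}" and \<mu>'_nonneg: "\<forall>A\<subseteq>X. \<mu>' A \<ge> 0"
    and \<mu>'_supp: "\<forall>A\<subseteq>X. \<mu>' A \<noteq> 0 \<longrightarrow> A \<in> As ` {1..m}" and \<mu>'_phi: "\<forall>x\<in>X. phi X \<mu>' x = max (f x) 0"
    using phi_chain_decomposition[OF assms(1), of "\<lambda>x. max (f x) 0"] by auto
  obtain n Bs \<nu>' where "1 \<le> n" and Bs_chain: "\<forall>i\<in>{1..<n}. Bs i \<subset> Bs (Suc i)"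
    and Bs_neg: "Bs ` {1..n} \<subseteq> Pow {x\<in>X. max (- f x) 0 > 0}" and \<nu>'_nonneg: "\<forall>A\<subseteq>X. \<nu>' A \<ge> 0"
    and \<nu>'_supp: "\<forall>A\<subseteq>X. \<nu>' A \<noteq> 0 \<longrightarrow> A \<in> Bs ` {1..n}" and \<nu>'_phi: "\<forall>x\<in>X. phi X \<nu>' x = max (- f x) 0"
    using phi_chain_decomposition[OF assms(1), of "\<lambda>x. max (- f x) 0"] by auto
  have "{x\<in>X. max (f x) 0 > 0} \<subseteq> X - N" "{x\<in>X. max (- f x) 0 > 0} \<subseteq> N"
    unfolding N_def by auto
  then have As_Q: "As ` {1..m} \<subseteq> Pow (X - N)" and Bs_N: "Bs ` {1..n} \<subseteq> Pow N"
    using As_pos Bs_neg by (meson Pow_mono subset_trans)+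
  have partition: "(X - N) \<inter> N = {}" "(X - N) \<union> N = X" unfolding N_def by auto
  have phi_eq: "\<forall>x\<in>X. phi X \<mu>' x - phi X \<nu>' x = phi X \<mu> x - phi X \<nu> x"
    using \<mu>'_phi \<nu>'_phi unfolding f_def by auto
  have cost: "(\<Sum>A\<in>Pow X. (\<mu>' A + \<nu>' A) * S A) \<le> (\<Sum>A\<in>Pow X. (\<mu> A + \<nu> A) * S A)"
    using weighted_entropy_le_of_chain_supports[OF assms(1,2) partition
        strict_chain_is_chain[OF As_chain] As_Q strict_chain_is_chain[OF Bs_chain] Bs_N
        assms(3,4) \<mu>'_supp \<nu>'_supp phi_eq] .
  have "\<forall>i\<in>{1..m}. As i \<subseteq> X" "\<forall>j\<in>{1..n}. Bs j \<subseteq> X" "As m \<inter> Bs n = {}"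
    using As_Q Bs_N \<open>1 \<le> m\<close> \<open>1 \<le> n\<close> unfolding N_def by fastforce+
  then show ?thesis
    using \<open>1 \<le> m\<close> \<open>1 \<le> n\<close> As_chain Bs_chain \<mu>'_nonneg \<nu>'_nonneg \<mu>'_supp \<nu>'_supp phi_eq cost
    by (intro exI[of _ m] exI[of _ n] exI[of _ As] exI[of _ Bs] exI[of _ \<mu>'] exI[of _ \<nu>']
        conjI allI impI) simp_all
qed

end
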